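(* Let $C_{\mathrm G}=\frac{5\cdot 3^{4/5}}{\pi^{7/5}}\approx 2.42493$ and let $Z_d\sim\mathcal N(0,1/d)$. Then for every dimension $d=2^m$ ($m\ge1$ an integer), \[ \sup_{u\in S^{d-1}}\ \sup_{1\le k\le d}\ \mathrm{K}\bigl([T(u)]_k,Z_d\bigr)\le C_{\mathrm G}\,d^{-1/5}. \]
   Context: $H$ is the unnormalized $d\times d$ Walsh--Hadamard matrix ($H_1=(1)$, $H_{2n}=\begin{pmatrix}H_n&H_n\\H_n&-H_n\end{pmatrix}$). $D^{(1)},D^{(2)}$ are independent diagonal matrices with i.i.d. Rademacher diagonal entries. For deterministic $u\in S^{d-1}$ (the unit sphere), $T(u)=\frac1d HD^{(1)}HD^{(2)}u$, and $[v]_k$ is the $k$th coordinate. $\mathrm{K}(A,B)=\sup_{t\in\mathbb{R}}|\mathbb{P}(A\le t)-\mathbb{P}(B\le t)|$ is the Kolmogorov distance. *)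

theory Defs
  imports "HOL-Probability.Probability"
begin

text \<open>Unnormalized Walsh--Hadamard matrix of size 2^m, indices 0..2^m-1,
  defined by the recursion H_1 = (1), H_2n = [[H_n, H_n],[H_n, -H_n]].\<close>
fun hadamard :: "nat \<Rightarrow> nat \<Rightarrow> nat \<Rightarrow> real" where
  "hadamard 0 i j = 1"
| "hadamard (Suc m) i j =
     (let n = 2 ^ m in
      if i < n \<and> j < n then hadamard m i j
      else if i < n then hadamard m i (j - n)
      else if j < n then hadamard m (i - n) j
      else - hadamard m (i - n) (j - n))"

text \<open>Rademacher sign vectors of length d (entries outside 0..d-1 are undefined).\<close>
definition sign_vectors :: "nat \<Rightarrow> (nat \<Rightarrow> real) set" where
  "sign_vectors d = Pi\<^sub>E {..<d} (\<lambda>_. {-1, 1})"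

text \<open>k-th coordinate of T(u) = (1/d) H D1 H D2 u for d = 2^m, signs e1, e2.\<close>
definition T_coord :: "nat \<Rightarrow> (nat \<Rightarrow> real) \<Rightarrow> (nat \<Rightarrow> real) \<Rightarrow> (nat \<Rightarrow> real) \<Rightarrow> nat \<Rightarrow> real" where
  "T_coord m e1 e2 u k =
     (1 / 2 ^ m) * (\<Sum>j<2^m. hadamard m k j * e1 j *
        (\<Sum>l<2^m. hadamard m j l * e2 l * u l))"

definition T_law :: "nat \<Rightarrow> (nat \<Rightarrow> real) \<Rightarrow> nat \<Rightarrow> real measure" where
  "T_law m u k = measure_pmf (map_pmf (\<lambda>(e1, e2). T_coord m e1 e2 u k)
      (pmf_of_set (sign_vectors (2^m) \<times> sign_vectors (2^m))))"

definition gauss_law :: "real \<Rightarrow> real measure" where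
  "gauss_law v = density lborel (normal_density 0 (sqrt v))"

definition kolmogorov_dist :: "real measure \<Rightarrow> real measure \<Rightarrow> real" where
  "kolmogorov_dist M N = (SUP t. \<bar>measure M {..t} - measure N {..t}\<bar>)"

definition C_G :: real where
  "C_G = 5 * 3 powr (4/5) / pi powr (7/5)"

end

theory Submission
  imports Defs
begin

text \<open>
  Given \<open>D\<^sub>2\<close>, the coordinate \<open>[T(u)]\<^sub>k = \<Sum>\<^sub>j c\<^sub>j \<epsilon>\<^sub>j\<close> is a Rademacher sum in the signs \<open>\<epsilon>\<close>
  of \<open>D\<^sub>1\<close>, with \<open>\<Sum> c\<^sub>j\<^sup>2 = 1/d\<close> since \<open>H/\<surd>d\<close> is orthogonal, and with \<open>\<Sum> c\<^sub>j\<^sup>4 \<le> 3/d\<^sup>3\<close> on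
  average over \<open>D\<^sub>2\<close> by the fourth moment bound for Rademacher sums. After convolving both
  distribution functions with \<open>N(0, \<delta>\<^sup>2)\<close>, Lindeberg's method replaces the signs one at a time
  by Gaussians. As \<open>\<Phi>(w / \<surd>v)\<close> solves the heat equation, each replacement costs
  \<open>O(c\<^sub>j\<^sup>4 / \<delta>\<^sup>4)\<close>, so the smoothed distribution functions differ by \<open>O(1 / (\<delta>\<^sup>4 d\<^sup>3))\<close>.
  A smoothing inequality removes the convolution at the cost \<open>O(\<delta> \<surd>d)\<close>, \<open>\<surd>d / \<surd>(2\<pi>)\<close>
  being the Lipschitz constant of the distribution function of \<open>N(0, 1/d)\<close>. Balancing the
  two errors with \<open>\<delta> \<sim> d\<^sup>-\<^sup>7\<^sup>/\<^sup>1\<^sup>0\<close> gives the rate \<open>d\<^sup>-\<^sup>1\<^sup>/\<^sup>5\<close>.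
\<close>

section \<open>The standard normal distribution function\<close>

definition Phi :: "real \<Rightarrow> real" where
  "Phi = cdf (gauss_law 1)"

lemma prob_space_gauss_law: "0 < v \<Longrightarrow> prob_space (gauss_law v)"
  unfolding gauss_law_def by (rule prob_space_normal_density) simp

lemma sets_gauss_law [simp, measurable_cong]: "sets (gauss_law v) = sets borel"
  unfolding gauss_law_def by simp

lemma space_gauss_law [simp]: "space (gauss_law v) = UNIV"
  unfolding gauss_law_def by simp

lemma continuous_on_std_normal_density: "continuous_on A std_normal_density"
  unfolding std_normal_density_def by (intro continuous_intros) auto

lemma Phi_eq_integral:
  assumes "a \<le> x"
  shows "Phi x = measure (gauss_law 1) {..<a} + integral {a..x} std_normal_density"
proof -
  interpret N: prob_space "gauss_law 1" by (rule prob_space_gauss_law) simp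
  have int: "(std_normal_density has_integral integral {a..x} std_normal_density) {a..x}"
    by (intro integrable_integral integrable_continuous_interval continuous_on_std_normal_density)
  have "emeasure (gauss_law 1) {a..x}
      = (\<integral>\<^sup>+ y. ennreal (std_normal_density y) * indicator {a..x} y \<partial>lborel)"
    unfolding gauss_law_def by (subst emeasure_density) auto
  also have "\<dots> = ennreal (integral {a..x} std_normal_density)"
    by (rule nn_integral_has_integral_lebesgue'[OF _ int]) auto
  finally have Icc: "measure (gauss_law 1) {a..x} = integral {a..x} std_normal_density"
    using has_integral_nonneg[OF int] by (simp add: N.emeasure_eq_measure)
  have "{..x} = {..<a} \<union> {a..x}" using assms by auto
  then have "Phi x = measure (gauss_law 1) ({..<a} \<union> {a..x})" by (simp add: Phi_def cdf_def)
  also have "\<dots> = measure (gauss_law 1) {..<a} + measure (gauss_law 1) {a..x}"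
    by (rule N.finite_measure_Union) auto
  finally show ?thesis using Icc by simp
qed

lemma Phi_has_real_derivative: "(Phi has_real_derivative std_normal_density x) (at x)"
proof -
  define a b where "a = x - 1" and "b = x + 1"
  have "((\<lambda>y. integral {a..y} std_normal_density) has_real_derivative std_normal_density x)
      (at x within {a..b})"
    by (rule integral_has_real_derivative)
      (auto simp: a_def b_def intro: continuous_on_std_normal_density)
  then have "((\<lambda>y. measure (gauss_law 1) {..<a} + integral {a..y} std_normal_density)
      has_real_derivative std_normal_density x) (at x)"
    by (auto simp: at_within_Icc_at a_def b_def intro!: derivative_eq_intros)
  then show ?thesis
    by (rule has_field_derivative_transform_within_open[where S="{a<..<b}"])
      (auto simp: a_def b_def intro!: Phi_eq_integral[symmetric])
qed

lemma isCont_Phi: "isCont Phi x"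
  by (rule DERIV_isCont[OF Phi_has_real_derivative])

lemma borel_measurable_Phi [measurable]: "Phi \<in> borel_measurable borel"
  by (intro borel_measurable_continuous_onI continuous_at_imp_continuous_on ballI isCont_Phi)

lemma Phi_nonneg: "0 \<le> Phi x"
  by (simp add: Phi_def cdf_def)

lemma Phi_le_1: "Phi x \<le> 1"
proof -
  interpret prob_space "gauss_law 1" by (rule prob_space_gauss_law) simp
  show ?thesis by (simp add: Phi_def cdf_def)
qed

lemma Phi_mono: "x \<le> y \<Longrightarrow> Phi x \<le> Phi y"
  by (rule DERIV_nonneg_imp_nondecreasing) (auto intro!: exI Phi_has_real_derivative)

lemma std_normal_density_le: "std_normal_density x \<le> 1 / sqrt (2 * pi)"
  by (simp add: std_normal_density_def divide_right_mono)

lemma Phi_lipschitz: "\<bar>Phi x - Phi y\<bar> \<le> \<bar>x - y\<bar> / sqrt (2 * pi)"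
proof -
  have "Phi y - Phi x \<le> (y - x) / sqrt (2 * pi)" if "x \<le> y" for x y
  proof -
    have "(\<lambda>z. z / sqrt (2 * pi) - Phi z) x \<le> (\<lambda>z. z / sqrt (2 * pi) - Phi z) y"
    proof (rule DERIV_nonneg_imp_nondecreasing[OF that])
      fix z
      have "((\<lambda>z. z / sqrt (2 * pi)) has_real_derivative 1 / sqrt (2 * pi)) (at z)"
        by (rule DERIV_cdivide[OF DERIV_ident, simplified])
      from DERIV_diff[OF this Phi_has_real_derivative]
      show "\<exists>w. ((\<lambda>z. z / sqrt (2 * pi) - Phi z) has_real_derivative w) (at z) \<and> 0 \<le> w"
        using std_normal_density_le[of z] by auto
    qed
    then show ?thesis by (simp add: diff_divide_distrib)
  qed
  then show ?thesis
    using Phi_mono[of x y] Phi_mono[of y x] by (cases "x \<le> y") (auto simp: abs_if)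
qed

lemma cdf_gauss_law:
  assumes "0 < v"
  shows "cdf (gauss_law v) x = Phi (x / sqrt v)"
proof -
  define \<sigma> where "\<sigma> = sqrt v"
  have \<sigma>: "0 < \<sigma>" using assms by (simp add: \<sigma>_def)
  interpret N: prob_space "gauss_law v" by (rule prob_space_gauss_law[OF assms])
  interpret S: prob_space "gauss_law 1" by (rule prob_space_gauss_law) simp
  have scale: "\<sigma> * normal_density 0 \<sigma> (\<sigma> * w) = std_normal_density w" for w
    using \<sigma> unfolding normal_density_def
    by (simp add: real_sqrt_mult power_mult_distrib field_simps)
  have "emeasure (gauss_law v) {..x}
      = (\<integral>\<^sup>+ y. ennreal (normal_density 0 \<sigma> y) * indicator {..x} y \<partial>lborel)"
    unfolding gauss_law_def \<sigma>_def by (subst emeasure_density) auto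
  also have "\<dots> = ennreal \<bar>\<sigma>\<bar> * (\<integral>\<^sup>+ w. ennreal (normal_density 0 \<sigma> (0 + \<sigma> * w))
      * indicator {..x} (0 + \<sigma> * w) \<partial>lborel)"
    by (rule nn_integral_real_affine) (use \<sigma> in auto)
  also have "\<dots> = (\<integral>\<^sup>+ w. ennreal (std_normal_density w) * indicator {..x / \<sigma>} w \<partial>lborel)"
    using \<sigma>
    by (subst nn_integral_cmult[symmetric])
      (auto intro!: nn_integral_cong simp: scale[symmetric] ennreal_mult'[symmetric]
        indicator_def field_simps mult.assoc)
  also have "\<dots> = emeasure (gauss_law 1) {..x / \<sigma>}"
    unfolding gauss_law_def by (subst emeasure_density) auto
  finally show ?thesis
    by (simp add: Phi_def cdf_def \<sigma>_def N.emeasure_eq_measure S.emeasure_eq_measure)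
qed

lemma Phi_symmetric_interval_lower:
  assumes "0 \<le> x"
  shows "(2 * x - x ^ 3 / 3) / sqrt (2 * pi) \<le> Phi x - Phi (- x)"
proof -
  let ?f = "\<lambda>z. Phi z - (z - z ^ 3 / 6) / sqrt (2 * pi)"
  have "?f (- x) \<le> ?f x"
  proof (rule DERIV_nonneg_imp_nondecreasing[where f = ?f])
    fix z :: real
    have "1 - z\<^sup>2 / 2 \<le> exp (- z\<^sup>2 / 2)" using exp_ge_add_one_self[of "- z\<^sup>2 / 2"] by simp
    then have "(1 - z\<^sup>2 / 2) / sqrt (2 * pi) \<le> std_normal_density z"
      by (simp add: std_normal_density_def divide_right_mono)
    moreover have "(?f has_real_derivative std_normal_density z - (1 - z\<^sup>2 / 2) / sqrt (2 * pi)) (at z)"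
      by (auto intro!: derivative_eq_intros Phi_has_real_derivative simp: power2_eq_square field_simps)
    ultimately show "\<exists>y. (?f has_real_derivative y) (at z) \<and> 0 \<le> y" by auto
  qed (use assms in simp)
  then show ?thesis by (simp add: diff_divide_distrib)
qed

lemma measure_gauss_law_symmetric_interval:
  assumes v: "0 < v" and "0 \<le> a"
  shows "Phi (a / sqrt v) - Phi (- a / sqrt v) \<le> measure (gauss_law v) {-a..a}"
proof -
  interpret N: prob_space "gauss_law v" by (rule prob_space_gauss_law[OF v])
  have "{..a} = {..<-a} \<union> {-a..a}" using \<open>0 \<le> a\<close> by auto
  then have "measure (gauss_law v) {..a} = measure (gauss_law v) {..<-a} + measure (gauss_law v) {-a..a}"
    by (simp, intro N.finite_measure_Union) auto
  moreover have "measure (gauss_law v) {..<-a} \<le> measure (gauss_law v) {..-a}"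
    by (rule N.finite_measure_mono) auto
  ultimately show ?thesis
    using cdf_gauss_law[OF v, of a] cdf_gauss_law[OF v, of "- a"] by (simp add: cdf_def)
qed

section \<open>Taylor expansions of \<^const>\<open>Phi\<close>\<close>

text \<open>Only the orders \<open>k \<le> 4\<close> are derivatives of \<^const>\<open>Phi\<close>; larger \<open>k\<close> repeat the fourth.\<close>

definition Phi_diff :: "nat \<Rightarrow> real \<Rightarrow> real" where
  "Phi_diff k z =
    (if k = 0 then Phi z
     else if k = 1 then std_normal_density z
     else if k = 2 then - z * std_normal_density z
     else if k = 3 then (z\<^sup>2 - 1) * std_normal_density z
     else (3 * z - z ^ 3) * std_normal_density z)"

lemma std_normal_density_has_real_derivative:
  "(std_normal_density has_real_derivative - (z * std_normal_density z)) (at z)"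
  unfolding std_normal_density_def
  by (auto intro!: derivative_eq_intros simp: field_simps power2_eq_square)

lemma Phi_diff_has_real_derivative:
  assumes "k < 4"
  shows "(Phi_diff k has_real_derivative Phi_diff (Suc k) z) (at z)"
proof -
  consider "k = 0" | "k = 1" | "k = 2" | "k = 3" using assms by linarith
  then show ?thesis
    unfolding Phi_diff_def[abs_def]
    by cases (auto intro!: derivative_eq_intros Phi_has_real_derivative
        std_normal_density_has_real_derivative
        simp: algebra_simps power2_eq_square power3_eq_cube)
qed

lemma abs_3x_minus_cube_le: "\<bar>3 * z - z ^ 3\<bar> \<le> 2 * exp ((z::real)\<^sup>2 / 2)"
proof -
  define w where "w = \<bar>z\<bar>"
  have w: "0 \<le> w" by (simp add: w_def)
  have "3 * w \<le> 2 + w\<^sup>2 + w ^ 4 / 4"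
    using zero_le_power2[of "w\<^sup>2 / 2 - 1 / 2"] zero_le_power2[of "w - 1"]
    by (simp add: power2_eq_square power4_eq_xxxx algebra_simps)
  moreover have "w ^ 3 \<le> w\<^sup>2 + w ^ 4 / 4"
    using zero_le_power2[of "w\<^sup>2 / 2 - w"]
    by (simp add: power2_eq_square power3_eq_cube power4_eq_xxxx algebra_simps)
  moreover have "0 \<le> w ^ 3" using w by simp
  ultimately have "\<bar>3 * w - w ^ 3\<bar> \<le> 2 + w\<^sup>2 + w ^ 4 / 4"
    using w unfolding abs_le_iff by linarith
  also have "\<dots> \<le> 2 * exp (w\<^sup>2 / 2)"
    using exp_lower_Taylor_quadratic[of "w\<^sup>2 / 2"]
    by (simp add: power2_eq_square power4_eq_xxxx algebra_simps)
  also have "\<bar>3 * w - w ^ 3\<bar> = \<bar>3 * z - z ^ 3\<bar>"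
    by (cases "z \<ge> 0") (auto simp: w_def power3_eq_cube)
  finally show ?thesis by (simp add: w_def)
qed

lemma abs_Phi_diff_4_le: "\<bar>Phi_diff 4 z\<bar> \<le> 2 / sqrt (2 * pi)"
proof -
  have "\<bar>Phi_diff 4 z\<bar> = \<bar>3 * z - z ^ 3\<bar> * exp (- z\<^sup>2 / 2) / sqrt (2 * pi)"
    by (simp add: Phi_diff_def std_normal_density_def abs_mult)
  also have "\<dots> \<le> 2 * exp (z\<^sup>2 / 2) * exp (- z\<^sup>2 / 2) / sqrt (2 * pi)"
    by (intro divide_right_mono mult_right_mono abs_3x_minus_cube_le) auto
  also have "\<dots> = 2 / sqrt (2 * pi)" by (simp add: mult.assoc flip: exp_add)
  finally show ?thesis .
qed

lemma Taylor_remainder_abs_le: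
  fixes f :: "real \<Rightarrow> real"
  assumes "0 < n" and "diff 0 = f"
    and "\<And>m t. m < n \<Longrightarrow> min c x \<le> t \<Longrightarrow> t \<le> max c x \<Longrightarrow>
      (diff m has_real_derivative diff (Suc m) t) (at t)"
    and bound: "\<And>t. min c x \<le> t \<Longrightarrow> t \<le> max c x \<Longrightarrow> \<bar>diff n t\<bar> \<le> B"
  shows "\<bar>f x - (\<Sum>m<n. diff m c / fact m * (x - c) ^ m)\<bar> \<le> B / fact n * \<bar>x - c\<bar> ^ n"
proof (cases "x = c")
  case True
  have "0 \<le> B" using bound[of c] True by (smt (verit) max.cobounded1 min.cobounded1)
  moreover have "(\<Sum>m<n. diff m c / fact m * (x - c) ^ m) = (\<Sum>m\<in>{0}. diff m c / fact m * (x - c) ^ m)"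
    using True \<open>0 < n\<close> by (intro sum.mono_neutral_right) auto
  ultimately show ?thesis using True assms(2) by simp
next
  case False
  obtain t where t: "if x < c then x < t \<and> t < c else c < t \<and> t < x"
    and eq: "f x = (\<Sum>m<n. diff m c / fact m * (x - c) ^ m) + diff n t / fact n * (x - c) ^ n"
    using Taylor[of n diff f "min c x" "max c x" c x] assms False by auto
  have "\<bar>diff n t / fact n * (x - c) ^ n\<bar> = \<bar>diff n t\<bar> / fact n * \<bar>x - c\<bar> ^ n"
    by (simp add: abs_mult power_abs)
  also have "\<dots> \<le> B / fact n * \<bar>x - c\<bar> ^ n"
    using t by (intro mult_right_mono divide_right_mono bound) (auto split: if_splits)
  finally show ?thesis using eq by simp
qed

lemma Phi_two_point_average:
  assumes r: "0 < r"
  shows "\<bar>(Phi ((w - c) / r) + Phi ((w + c) / r)) / 2 - Phi (w / r)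
      - c\<^sup>2 / (2 * r\<^sup>2) * Phi_diff 2 (w / r)\<bar> \<le> c ^ 4 / (12 * sqrt (2 * pi) * r ^ 4)"
proof -
  define g where "g k x = Phi_diff k (x / r) / r ^ k" for k x
  have g0: "g 0 = (\<lambda>x. Phi (x / r))" by (auto simp: g_def Phi_diff_def)
  have deriv: "(g k has_real_derivative g (Suc k) x) (at x)" if "k < 4" for k x
  proof -
    have "((\<lambda>x. Phi_diff k (x / r)) has_real_derivative Phi_diff (Suc k) (x / r) * (1 / r)) (at x)"
      by (rule DERIV_chain2[OF Phi_diff_has_real_derivative[OF that] DERIV_cdivide[OF DERIV_ident]])
    then show ?thesis
      unfolding g_def using r by (auto intro!: derivative_eq_intros)
  qed
  have bound: "\<bar>g 4 x\<bar> \<le> 2 / (sqrt (2 * pi) * r ^ 4)" for x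
  proof -
    have "\<bar>g 4 x\<bar> = \<bar>Phi_diff 4 (x / r)\<bar> / r ^ 4" using r by (simp add: g_def abs_divide)
    also have "\<dots> \<le> 2 / sqrt (2 * pi) / r ^ 4"
      using r by (intro divide_right_mono abs_Phi_diff_4_le) simp
    finally show ?thesis by simp
  qed
  define K where "K = c ^ 4 / (12 * sqrt (2 * pi) * r ^ 4)"
  have taylor: "\<bar>Phi ((w + h) / r) - (Phi (w / r) + g 1 w * h + g 2 w / 2 * h\<^sup>2 + g 3 w / 6 * h ^ 3)\<bar>
      \<le> h ^ 4 / (12 * sqrt (2 * pi) * r ^ 4)" for h
  proof -
    have "\<bar>Phi ((w + h) / r) - (\<Sum>m<4. g m w / fact m * (w + h - w) ^ m)\<bar>
        \<le> 2 / (sqrt (2 * pi) * r ^ 4) / fact 4 * \<bar>w + h - w\<bar> ^ 4"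
      by (rule Taylor_remainder_abs_le[where diff=g]) (auto simp: g0 deriv bound)
    then show ?thesis
      unfolding add_diff_cancel_left' power_even_abs_numeral by (simp add: eval_nat_numeral g0 mult_ac)
  qed
  have "\<bar>Phi ((w - c) / r) - (Phi (w / r) - g 1 w * c + g 2 w / 2 * c\<^sup>2 - g 3 w / 6 * c ^ 3)\<bar> \<le> K"
    using taylor[of "- c"] by (simp add: K_def)
  moreover have "\<bar>Phi ((w + c) / r) - (Phi (w / r) + g 1 w * c + g 2 w / 2 * c\<^sup>2 + g 3 w / 6 * c ^ 3)\<bar> \<le> K"
    using taylor[of c] by (simp add: K_def)
  moreover have "c\<^sup>2 / (2 * r\<^sup>2) * Phi_diff 2 (w / r) = g 2 w / 2 * c\<^sup>2"
    by (simp add: g_def mult_ac)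
  ultimately show ?thesis
    unfolding K_def[symmetric] by (simp add: abs_le_iff field_simps)
qed

lemma has_real_derivative_divide_sqrt:
  assumes "0 < x"
  shows "((\<lambda>x. w / sqrt x) has_real_derivative - (w / sqrt x) / (2 * x)) (at x)"
  using assms
  by (auto intro!: derivative_eq_intros simp: field_simps real_sqrt_mult[symmetric])

lemma Phi_variance_has_real_derivative:
  assumes "0 < x"
  shows "((\<lambda>x. Phi (w / sqrt x)) has_real_derivative Phi_diff 2 (w / sqrt x) / (2 * x)) (at x)"
  using DERIV_chain2[OF Phi_has_real_derivative has_real_derivative_divide_sqrt[OF assms]]
  by (simp add: Phi_diff_def mult.commute)

lemma Phi_diff_2_variance_has_real_derivative:
  assumes x: "0 < x"
  shows "((\<lambda>x. Phi_diff 2 (w / sqrt x) / (2 * x)) has_real_derivative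
    Phi_diff 4 (w / sqrt x) / (4 * x\<^sup>2)) (at x)"
proof -
  define z where "z = w / sqrt x"
  have "((\<lambda>x. Phi_diff 2 (w / sqrt x)) has_real_derivative Phi_diff 3 z * (- z / (2 * x))) (at x)"
    using DERIV_chain2[OF Phi_diff_has_real_derivative[of 2] has_real_derivative_divide_sqrt[OF x]]
    by (simp add: z_def)
  then have "((\<lambda>x. Phi_diff 2 (w / sqrt x) / (2 * x)) has_real_derivative
      (- z * Phi_diff 3 z - 2 * Phi_diff 2 z) / (4 * x\<^sup>2)) (at x)"
    using x by (auto intro!: derivative_eq_intros simp: z_def field_simps power2_eq_square)
  moreover have "- z * Phi_diff 3 z - 2 * Phi_diff 2 z = Phi_diff 4 z"
    by (simp add: Phi_diff_def power2_eq_square power3_eq_cube algebra_simps)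
  ultimately show ?thesis by (simp add: z_def)
qed

lemma Phi_variance_increment:
  assumes v: "0 < v"
  shows "\<bar>Phi (w / sqrt (v + c\<^sup>2)) - Phi (w / sqrt v) - c\<^sup>2 / (2 * v) * Phi_diff 2 (w / sqrt v)\<bar>
    \<le> c ^ 4 / (4 * sqrt (2 * pi) * v\<^sup>2)"
proof -
  define g where "g k x =
    (if k = 0 then Phi (w / sqrt x) else if k = 1 then Phi_diff 2 (w / sqrt x) / (2 * x)
     else Phi_diff 4 (w / sqrt x) / (4 * x\<^sup>2))" for k :: nat and x
  have deriv: "(g k has_real_derivative g (Suc k) x) (at x)" if "k < 2" "v \<le> x" for k x
  proof -
    have x: "0 < x" using that v by linarith
    consider "k = 0" | "k = 1" using \<open>k < 2\<close> by linarith
    then show ?thesis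
      by cases (simp_all add: g_def[abs_def] Phi_variance_has_real_derivative[OF x]
          Phi_diff_2_variance_has_real_derivative[OF x])
  qed
  have bound: "\<bar>g 2 x\<bar> \<le> 1 / (2 * sqrt (2 * pi) * v\<^sup>2)" if "v \<le> x" for x
  proof -
    have "v\<^sup>2 \<le> x\<^sup>2" using that v by (intro power_mono) auto
    have "\<bar>g 2 x\<bar> = \<bar>Phi_diff 4 (w / sqrt x)\<bar> / (4 * x\<^sup>2)" by (simp add: g_def abs_divide)
    also have "\<dots> \<le> 2 / sqrt (2 * pi) / (4 * x\<^sup>2)"
      by (intro divide_right_mono abs_Phi_diff_4_le) simp
    also have "\<dots> \<le> 2 / sqrt (2 * pi) / (4 * v\<^sup>2)"
      using \<open>v\<^sup>2 \<le> x\<^sup>2\<close> v that by (intro divide_left_mono) auto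
    finally show ?thesis by (simp add: mult_ac)
  qed
  have "\<bar>Phi (w / sqrt (v + c\<^sup>2)) - (\<Sum>m<2. g m v / fact m * (v + c\<^sup>2 - v) ^ m)\<bar>
      \<le> 1 / (2 * sqrt (2 * pi) * v\<^sup>2) / fact 2 * \<bar>v + c\<^sup>2 - v\<bar> ^ 2"
    by (rule Taylor_remainder_abs_le[where diff=g]) (auto intro: deriv bound simp: fun_eq_iff g_def[of 0])
  then show ?thesis
    by (simp add: eval_nat_numeral g_def mult_ac)
qed

text \<open>Since \<open>(v, w) \<mapsto> \<Phi>(w / \<surd>v)\<close> solves the heat equation \<open>\<partial>\<^sub>v = \<partial>\<^sub>w\<^sup>2 / 2\<close>, replacing a
  Rademacher shift \<open>\<plusminus>c\<close> by an extra variance \<open>c\<^sup>2\<close> costs only a fourth order term.\<close>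

lemma cdf_gauss_law_replacement:
  assumes v: "0 < v"
  shows "\<bar>(cdf (gauss_law v) (w - c) + cdf (gauss_law v) (w + c)) / 2 - cdf (gauss_law (v + c\<^sup>2)) w\<bar>
    \<le> c ^ 4 / (3 * sqrt (2 * pi) * v\<^sup>2)"
proof -
  define K1 K2 where "K1 = c ^ 4 / (12 * sqrt (2 * pi) * v\<^sup>2)"
    and "K2 = c ^ 4 / (4 * sqrt (2 * pi) * v\<^sup>2)"
  have "sqrt v ^ 4 = v\<^sup>2" using v by (simp add: power_mult[symmetric] eval_nat_numeral)
  then have "\<bar>(Phi ((w - c) / sqrt v) + Phi ((w + c) / sqrt v)) / 2 - Phi (w / sqrt v)
      - c\<^sup>2 / (2 * v) * Phi_diff 2 (w / sqrt v)\<bar> \<le> K1"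
    using Phi_two_point_average[of "sqrt v" w c] v by (simp add: K1_def)
  moreover have "\<bar>Phi (w / sqrt (v + c\<^sup>2)) - Phi (w / sqrt v)
      - c\<^sup>2 / (2 * v) * Phi_diff 2 (w / sqrt v)\<bar> \<le> K2"
    unfolding K2_def by (rule Phi_variance_increment[OF v])
  moreover have "K1 + K2 = c ^ 4 / (3 * sqrt (2 * pi) * v\<^sup>2)"
    by (simp add: K1_def K2_def field_simps)
  moreover have "0 < v + c\<^sup>2" using v by (simp add: add_pos_nonneg)
  ultimately show ?thesis
    unfolding cdf_gauss_law[OF v] abs_le_iff by (simp add: cdf_gauss_law)
qed

section \<open>Rademacher sums\<close>

definition rademacher_avg :: "nat \<Rightarrow> ((nat \<Rightarrow> real) \<Rightarrow> real) \<Rightarrow> real" where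
  "rademacher_avg N f = (\<Sum>e\<in>sign_vectors N. f e) / 2 ^ N"

lemma finite_sign_vectors [simp]: "finite (sign_vectors N)"
  unfolding sign_vectors_def by (intro finite_PiE) auto

lemma card_sign_vectors: "card (sign_vectors N) = 2 ^ N"
  unfolding sign_vectors_def by (simp add: card_PiE numeral_2_eq_2)

lemma sign_vectors_nonempty: "sign_vectors N \<noteq> {}"
  unfolding sign_vectors_def by (simp add: PiE_eq_empty_iff)

lemma sign_vector_sq: "e \<in> sign_vectors N \<Longrightarrow> l < N \<Longrightarrow> (e l)\<^sup>2 = 1"
  unfolding sign_vectors_def by (drule PiE_mem[of _ _ _ l]) auto

lemma sum_sign_vectors_Suc:
  "(\<Sum>e\<in>sign_vectors (Suc N). f e) = (\<Sum>e\<in>sign_vectors N. f (e(N := 1)) + f (e(N := -1)))"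
proof -
  have eq: "sign_vectors (Suc N) = (\<lambda>(y, g). g(N := y)) ` ({-1, 1} \<times> sign_vectors N)"
    unfolding sign_vectors_def lessThan_Suc by (rule PiE_insert_eq)
  have inj: "inj_on (\<lambda>(y, g). g(N := y)) ({-1, 1} \<times> sign_vectors N)"
    unfolding sign_vectors_def by (rule inj_combinator) simp
  have "(\<Sum>e\<in>sign_vectors (Suc N). f e) = (\<Sum>(y, g)\<in>{-1, 1} \<times> sign_vectors N. f (g(N := y)))"
    unfolding eq by (subst sum.reindex[OF inj]) (simp add: case_prod_beta)
  also have "\<dots> = (\<Sum>y\<in>{-1, 1::real}. \<Sum>g\<in>sign_vectors N. f (g(N := y)))"
    by (subst sum.cartesian_product) simp
  finally show ?thesis by (simp add: sum.distrib add.commute)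
qed

lemma rademacher_avg_Suc:
  "rademacher_avg (Suc N) f = rademacher_avg N (\<lambda>e. (f (e(N := 1)) + f (e(N := -1))) / 2)"
  unfolding rademacher_avg_def sum_sign_vectors_Suc
  by (simp add: sum_divide_distrib[symmetric] field_simps)

lemma rademacher_avg_const [simp]: "rademacher_avg N (\<lambda>_. a) = a"
  unfolding rademacher_avg_def by (simp add: card_sign_vectors)

lemma rademacher_avg_add: "rademacher_avg N (\<lambda>e. f e + g e) = rademacher_avg N f + rademacher_avg N g"
  unfolding rademacher_avg_def by (simp add: sum.distrib add_divide_distrib)

lemma rademacher_avg_mult_left: "rademacher_avg N (\<lambda>e. a * f e) = a * rademacher_avg N f"
  unfolding rademacher_avg_def by (simp add: sum_distrib_left[symmetric])

lemma rademacher_avg_sum: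
  "rademacher_avg N (\<lambda>e. \<Sum>j\<in>J. f j e) = (\<Sum>j\<in>J. rademacher_avg N (f j))"
  unfolding rademacher_avg_def by (simp add: sum.swap[of _ J] sum_divide_distrib)

lemma rademacher_avg_cong:
  "(\<And>e. e \<in> sign_vectors N \<Longrightarrow> f e = g e) \<Longrightarrow> rademacher_avg N f = rademacher_avg N g"
  unfolding rademacher_avg_def by (metis sum.cong)

lemma abs_rademacher_avg_diff_le:
  assumes "\<And>e. e \<in> sign_vectors N \<Longrightarrow> \<bar>f e - g e\<bar> \<le> b e"
  shows "\<bar>rademacher_avg N f - rademacher_avg N g\<bar> \<le> rademacher_avg N b"
proof -
  have "\<bar>(\<Sum>e\<in>sign_vectors N. f e) - (\<Sum>e\<in>sign_vectors N. g e)\<bar> \<le> (\<Sum>e\<in>sign_vectors N. \<bar>f e - g e\<bar>)"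
    by (simp only: sum_subtractf[symmetric] sum_abs)
  also have "\<dots> \<le> (\<Sum>e\<in>sign_vectors N. b e)" using assms by (intro sum_mono) auto
  finally show ?thesis unfolding rademacher_avg_def
    by (simp add: diff_divide_distrib[symmetric] abs_divide divide_right_mono)
qed

lemma sum_lessThan_fun_upd_beyond: "(\<Sum>l<N::nat. a l * (e(N := b)) l) = (\<Sum>l<N. a l * e l)"
  by (rule sum.cong) auto

lemma lindeberg_rademacher:
  assumes "0 < v0" "v0 \<le> v"
  shows "\<bar>rademacher_avg N (\<lambda>e. cdf (gauss_law v) (w - (\<Sum>j<N. c j * e j)))
      - cdf (gauss_law (v + (\<Sum>j<N. (c j)\<^sup>2))) w\<bar> \<le> (\<Sum>j<N. c j ^ 4) / (3 * sqrt (2 * pi) * v0\<^sup>2)"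
  using assms(2)
proof (induction N arbitrary: v)
  case 0
  then show ?case by simp
next
  case (Suc N)
  define S where "S e = (\<Sum>j<N. c j * e j)" for e :: "nat \<Rightarrow> real"
  define v' where "v' = v + (c N)\<^sup>2"
  have v: "0 < v" using assms(1) Suc.prems by linarith
  have "rademacher_avg (Suc N) (\<lambda>e. cdf (gauss_law v) (w - (\<Sum>j<Suc N. c j * e j)))
      = rademacher_avg N (\<lambda>e. (cdf (gauss_law v) (w - S e - c N) + cdf (gauss_law v) (w - S e + c N)) / 2)"
    unfolding rademacher_avg_Suc S_def by (simp add: sum_lessThan_fun_upd_beyond algebra_simps)
  moreover have "\<bar>rademacher_avg N (\<lambda>e. (cdf (gauss_law v) (w - S e - c N) + cdf (gauss_law v) (w - S e + c N)) / 2)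
      - rademacher_avg N (\<lambda>e. cdf (gauss_law v') (w - S e))\<bar> \<le> c N ^ 4 / (3 * sqrt (2 * pi) * v0\<^sup>2)"
  proof -
    have "v0\<^sup>2 \<le> v\<^sup>2" using assms(1) Suc.prems by (intro power_mono) auto
    then have "c N ^ 4 / (3 * sqrt (2 * pi) * v\<^sup>2) \<le> c N ^ 4 / (3 * sqrt (2 * pi) * v0\<^sup>2)"
      using assms(1) v by (intro divide_left_mono) auto
    then have "\<bar>(cdf (gauss_law v) (w - S e - c N) + cdf (gauss_law v) (w - S e + c N)) / 2
        - cdf (gauss_law v') (w - S e)\<bar> \<le> c N ^ 4 / (3 * sqrt (2 * pi) * v0\<^sup>2)" for e
      using cdf_gauss_law_replacement[OF v, of "w - S e" "c N"] unfolding v'_def by simp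
    then have
      "\<bar>rademacher_avg N (\<lambda>e. (cdf (gauss_law v) (w - S e - c N) + cdf (gauss_law v) (w - S e + c N)) / 2)
        - rademacher_avg N (\<lambda>e. cdf (gauss_law v') (w - S e))\<bar>
        \<le> rademacher_avg N (\<lambda>_. c N ^ 4 / (3 * sqrt (2 * pi) * v0\<^sup>2))"
      by (intro abs_rademacher_avg_diff_le)
    then show ?thesis by simp
  qed
  moreover have "\<bar>rademacher_avg N (\<lambda>e. cdf (gauss_law v') (w - S e))
      - cdf (gauss_law (v' + (\<Sum>j<N. (c j)\<^sup>2))) w\<bar> \<le> (\<Sum>j<N. c j ^ 4) / (3 * sqrt (2 * pi) * v0\<^sup>2)"
    unfolding S_def using Suc.prems by (intro Suc.IH) (simp add: v'_def add_increasing2)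
  moreover have "v' + (\<Sum>j<N. (c j)\<^sup>2) = v + (\<Sum>j<Suc N. (c j)\<^sup>2)" by (simp add: v'_def)
  ultimately show ?case by (simp add: add_divide_distrib abs_le_iff)
qed

lemma rademacher_avg_sum_sq: "rademacher_avg N (\<lambda>e. (\<Sum>l<N. a l * e l)\<^sup>2) = (\<Sum>l<N. (a l)\<^sup>2)"
proof (induction N)
  case 0
  then show ?case by simp
next
  case (Suc N)
  have "rademacher_avg (Suc N) (\<lambda>e. (\<Sum>l<Suc N. a l * e l)\<^sup>2)
      = rademacher_avg N (\<lambda>e. (\<Sum>l<N. a l * e l)\<^sup>2 + (a N)\<^sup>2)"
    unfolding rademacher_avg_Suc
    by (intro rademacher_avg_cong) (simp add: sum_lessThan_fun_upd_beyond power2_eq_square algebra_simps)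
  also have "\<dots> = (\<Sum>l<Suc N. (a l)\<^sup>2)" by (simp add: rademacher_avg_add Suc.IH)
  finally show ?case .
qed

lemma rademacher_avg_sum_pow4_le:
  "rademacher_avg N (\<lambda>e. (\<Sum>l<N. a l * e l) ^ 4) \<le> 3 * (\<Sum>l<N. (a l)\<^sup>2)\<^sup>2"
proof (induction N)
  case 0
  then show ?case by simp
next
  case (Suc N)
  define A where "A = (\<Sum>l<N. (a l)\<^sup>2)"
  have "A \<ge> 0" unfolding A_def by (intro sum_nonneg) auto
  have "((x + y) ^ 4 + (x - y) ^ 4) / 2 = x ^ 4 + 6 * y\<^sup>2 * x\<^sup>2 + y ^ 4" for x y :: real
    by (simp add: power2_eq_square power4_eq_xxxx algebra_simps)
  then have "rademacher_avg (Suc N) (\<lambda>e. (\<Sum>l<Suc N. a l * e l) ^ 4)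
      = rademacher_avg N (\<lambda>e. (\<Sum>l<N. a l * e l) ^ 4 + 6 * (a N)\<^sup>2 * (\<Sum>l<N. a l * e l)\<^sup>2 + a N ^ 4)"
    unfolding rademacher_avg_Suc
    by (intro rademacher_avg_cong) (simp add: sum_lessThan_fun_upd_beyond flip: diff_conv_add_uminus)
  also have "\<dots> = rademacher_avg N (\<lambda>e. (\<Sum>l<N. a l * e l) ^ 4) + 6 * (a N)\<^sup>2 * A + a N ^ 4"
    by (simp add: rademacher_avg_add rademacher_avg_mult_left rademacher_avg_sum_sq A_def)
  also have "\<dots> \<le> 3 * A\<^sup>2 + 6 * (a N)\<^sup>2 * A + a N ^ 4"
    using Suc.IH by (simp add: A_def)
  also have "\<dots> \<le> 3 * (A + (a N)\<^sup>2)\<^sup>2"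
    using zero_le_even_power[of 4 "a N"] by (simp add: power2_eq_square power4_eq_xxxx algebra_simps)
  finally show ?case by (simp add: A_def)
qed

section \<open>The Walsh--Hadamard matrix and the coordinates of \<open>T(u)\<close>\<close>

lemma hadamard_sq: "(hadamard m i j)\<^sup>2 = 1"
  by (induction m arbitrary: i j) (auto simp: Let_def)

lemma hadamard_Suc_low:
  "j < 2 ^ m \<Longrightarrow> l < 2 * 2 ^ m \<Longrightarrow> hadamard (Suc m) j l = hadamard m j (l mod 2 ^ m)"
  by (auto simp: Let_def le_mod_geq not_less)

lemma hadamard_Suc_high:
  "j < 2 ^ m \<Longrightarrow> l < 2 * 2 ^ m \<Longrightarrow>
    hadamard (Suc m) (2 ^ m + j) l = (if l < 2 ^ m then 1 else -1) * hadamard m j (l mod 2 ^ m)"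
  by (auto simp: Let_def le_mod_geq not_less)

lemma sum_lessThan_add: "(\<Sum>j<n + k. f j) = (\<Sum>j<n. f j) + (\<Sum>j<k::nat. f (n + j))"
  by (induction k) (auto simp: add.assoc)

lemma hadamard_orthogonal:
  "l < 2 ^ m \<Longrightarrow> l' < 2 ^ m \<Longrightarrow>
    (\<Sum>j<2 ^ m. hadamard m j l * hadamard m j l') = (if l = l' then 2 ^ m else 0)"
proof (induction m arbitrary: l l')
  case 0
  then show ?case by simp
next
  case (Suc m)
  define n :: nat where "n = 2 ^ m"
  define s :: "nat \<Rightarrow> real" where "s x = (if x < n then 1 else -1)" for x
  have n2: "2 ^ Suc m = n + n" by (simp add: n_def)
  have l: "l < n + n" "l' < n + n" using Suc.prems n2 by auto
  have low: "hadamard (Suc m) j x = hadamard m j (x mod n)" if "j < n" "x < n + n" for j x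
    using hadamard_Suc_low[of j m x] that by (simp add: n_def)
  have high: "hadamard (Suc m) (n + j) x = s x * hadamard m j (x mod n)" if "j < n" "x < n + n" for j x
    using hadamard_Suc_high[of j m x] that by (simp add: n_def s_def)
  have "(\<Sum>j<2 ^ Suc m. hadamard (Suc m) j l * hadamard (Suc m) j l')
      = (\<Sum>j<n. hadamard m j (l mod n) * hadamard m j (l' mod n)) * (1 + s l * s l')"
  proof -
    have "(\<Sum>j<n. hadamard (Suc m) j l * hadamard (Suc m) j l')
        = (\<Sum>j<n. hadamard m j (l mod n) * hadamard m j (l' mod n))"
      by (intro sum.cong refl) (simp only: low l lessThan_iff)
    moreover have "(\<Sum>j<n. hadamard (Suc m) (n + j) l * hadamard (Suc m) (n + j) l')
        = (\<Sum>j<n. hadamard m j (l mod n) * hadamard m j (l' mod n)) * (s l * s l')"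
      unfolding sum_distrib_right by (intro sum.cong refl) (simp only: high l lessThan_iff mult_ac)
    ultimately show ?thesis unfolding n2 sum_lessThan_add by (simp add: algebra_simps)
  qed
  also have "\<dots> = (if l mod n = l' mod n then real n else 0) * (1 + s l * s l')"
    using Suc.IH[of "l mod n" "l' mod n"] by (simp add: n_def)
  also have "\<dots> = (if l = l' then 2 ^ Suc m else 0)"
    using l by (auto simp: s_def n2 le_mod_geq not_less) (simp_all add: n_def)
  finally show ?case .
qed

definition HD :: "nat \<Rightarrow> (nat \<Rightarrow> real) \<Rightarrow> (nat \<Rightarrow> real) \<Rightarrow> nat \<Rightarrow> real" where
  "HD m e u j = (\<Sum>l<2 ^ m. hadamard m j l * e l * u l)"

lemma sum_HD_sq:
  assumes e: "e \<in> sign_vectors (2 ^ m)"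
  shows "(\<Sum>j<2 ^ m. (HD m e u j)\<^sup>2) = 2 ^ m * (\<Sum>l<2 ^ m. (u l)\<^sup>2)"
proof -
  define a where "a l = e l * u l" for l
  have "(\<Sum>j<2 ^ m. (HD m e u j)\<^sup>2)
      = (\<Sum>j<(2::nat) ^ m. \<Sum>l<(2::nat) ^ m. \<Sum>l'<(2::nat) ^ m.
          a l * a l' * (hadamard m j l * hadamard m j l'))"
    unfolding HD_def power2_eq_square sum_product a_def by (simp add: mult_ac)
  also have "\<dots> = (\<Sum>l<(2::nat) ^ m. \<Sum>l'<(2::nat) ^ m.
      a l * a l' * (\<Sum>j<(2::nat) ^ m. hadamard m j l * hadamard m j l'))"
    by (subst sum.swap, rule sum.cong[OF refl], subst sum.swap) (simp add: sum_distrib_left)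
  also have "\<dots> = (\<Sum>l<(2::nat) ^ m. (a l)\<^sup>2 * 2 ^ m)"
    by (simp add: hadamard_orthogonal power2_eq_square if_distrib cong: if_cong)
  also have "\<dots> = 2 ^ m * (\<Sum>l<2 ^ m. (u l)\<^sup>2)"
    unfolding sum_distrib_left
    by (intro sum.cong refl) (simp add: a_def power_mult_distrib sign_vector_sq[OF e])
  finally show ?thesis .
qed

lemma rademacher_avg_sum_HD_pow4_le:
  "rademacher_avg (2 ^ m) (\<lambda>e. \<Sum>j<2 ^ m. (HD m e u j) ^ 4) \<le> 3 * 2 ^ m * (\<Sum>l<2 ^ m. (u l)\<^sup>2)\<^sup>2"
proof -
  have "rademacher_avg (2 ^ m) (\<lambda>e. (HD m e u j) ^ 4) \<le> 3 * (\<Sum>l<2 ^ m. (u l)\<^sup>2)\<^sup>2" for j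
  proof -
    have "rademacher_avg (2 ^ m) (\<lambda>e. (HD m e u j) ^ 4)
        = rademacher_avg (2 ^ m) (\<lambda>e. (\<Sum>l<2 ^ m. (hadamard m j l * u l) * e l) ^ 4)"
      unfolding HD_def by (simp add: mult_ac)
    also have "\<dots> \<le> 3 * (\<Sum>l<2 ^ m. (hadamard m j l * u l)\<^sup>2)\<^sup>2"
      by (rule rademacher_avg_sum_pow4_le)
    finally show ?thesis by (simp add: power_mult_distrib hadamard_sq)
  qed
  then have "(\<Sum>j<2 ^ m. rademacher_avg (2 ^ m) (\<lambda>e. (HD m e u j) ^ 4))
      \<le> (\<Sum>j<(2::nat) ^ m. 3 * (\<Sum>l<2 ^ m. (u l)\<^sup>2)\<^sup>2)"
    by (intro sum_mono)
  then show ?thesis by (simp add: rademacher_avg_sum)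
qed

lemma T_coord_eq_sum_HD:
  "T_coord m e1 e2 u k = (\<Sum>j<2 ^ m. hadamard m k j * HD m e2 u j / 2 ^ m * e1 j)"
  unfolding T_coord_def HD_def sum_distrib_left
  by (intro sum.cong refl) (simp add: sum_distrib_left sum_distrib_right sum_divide_distrib mult_ac)

section \<open>Gaussian smoothing\<close>

lemma gauss_law_convolution:
  assumes "0 < v" "0 < s"
  shows "gauss_law v \<star> gauss_law s = gauss_law (v + s)"
proof -
  have "gauss_law v \<star> gauss_law s = density lborel (\<lambda>x. \<integral>\<^sup>+y.
      ennreal (normal_density 0 (sqrt v) (x - y)) * ennreal (normal_density 0 (sqrt s) y) \<partial>lborel)"
    unfolding gauss_law_def
    by (rule convolution_density) (auto intro!: prob_space.finite_measure prob_space_normal_density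
        simp: assms)
  also have "\<dots> = density lborel (normal_density 0 (sqrt ((sqrt v)\<^sup>2 + (sqrt s)\<^sup>2)))"
    using conv_normal_density_zero_mean[of "sqrt v" "sqrt s"] assms
    by (simp add: ennreal_mult'' fun_eq_iff)
  finally show ?thesis using assms by (simp add: gauss_law_def)
qed

lemma integral_cdf_gauss_law_shift:
  assumes v: "0 < v" and s: "0 < s"
  shows "(\<integral>z. cdf (gauss_law s) (t - z) \<partial>gauss_law v) = cdf (gauss_law (v + s)) t"
proof -
  interpret V: prob_space "gauss_law v" by (rule prob_space_gauss_law[OF v])
  interpret S: prob_space "gauss_law s" by (rule prob_space_gauss_law[OF s])
  interpret VS: prob_space "gauss_law (v + s)" by (rule prob_space_gauss_law) (use v s in simp)
  have "ennreal (cdf (gauss_law (v + s)) t) = emeasure (gauss_law v \<star> gauss_law s) {..t}"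
    by (simp add: gauss_law_convolution[OF v s] cdf_def VS.emeasure_eq_measure)
  also have "\<dots> = (\<integral>\<^sup>+z. emeasure (gauss_law s) {a. a + z \<in> {..t}} \<partial>gauss_law v)"
    by (rule convolution_emeasure) (auto intro: V.finite_measure S.finite_measure)
  also have "\<dots> = (\<integral>\<^sup>+z. ennreal (cdf (gauss_law s) (t - z)) \<partial>gauss_law v)"
    by (intro nn_integral_cong) (simp add: cdf_def S.emeasure_eq_measure atMost_def le_diff_eq)
  finally have "(\<integral>\<^sup>+z. ennreal (cdf (gauss_law s) (t - z)) \<partial>gauss_law v) = cdf (gauss_law (v + s)) t"
    by simp
  moreover have "(\<lambda>z. cdf (gauss_law s) (t - z)) \<in> borel_measurable (gauss_law v)"
    unfolding cdf_gauss_law[OF s] by measurable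
  ultimately show ?thesis
    by (subst integral_eq_nn_integral) (auto simp: cdf_def)
qed

lemma integral_cdf_map_pmf_of_set_shift:
  assumes S: "finite S" "S \<noteq> {}" and v: "0 < v"
  shows "(\<integral>z. cdf (measure_pmf (map_pmf f (pmf_of_set S))) (t - z) \<partial>gauss_law v)
    = (\<Sum>s\<in>S. cdf (gauss_law v) (t - f s)) / card S"
proof -
  interpret N: prob_space "gauss_law v" by (rule prob_space_gauss_law[OF v])
  have "cdf (measure_pmf (map_pmf f (pmf_of_set S))) (t - z) = (\<Sum>s\<in>S. indicator {..t - f s} z) / card S" for z
  proof -
    have "(\<Sum>s\<in>S. indicator {..t - f s} z) = (\<Sum>s\<in>S. indicator (f -` {..t - z}) s :: real)"
      by (intro sum.cong) (auto simp: indicator_def)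
    also have "\<dots> = card (S \<inter> f -` {..t - z})"
      using S(1) by (simp add: indicator_def sum.If_cases Int_def)
    finally show ?thesis
      by (simp add: cdf_def measure_map_pmf measure_pmf_of_set[OF S(2,1)])
  qed
  then have "(\<integral>z. cdf (measure_pmf (map_pmf f (pmf_of_set S))) (t - z) \<partial>gauss_law v)
      = (\<integral>z. (\<Sum>s\<in>S. indicator {..t - f s} z) \<partial>gauss_law v) / card S"
    by simp
  also have "(\<integral>z. (\<Sum>s\<in>S. indicator {..t - f s} z) \<partial>gauss_law v)
      = (\<Sum>s\<in>S. \<integral>z. (indicator {..t - f s} z :: real) \<partial>gauss_law v)"
    by (intro Bochner_Integration.integral_sum integrable_real_indicator)
      (auto simp: N.emeasure_eq_measure)
  also have "\<dots> = (\<Sum>s\<in>S. cdf (gauss_law v) (t - f s))"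
    by (simp add: cdf_def N.emeasure_eq_measure)
  finally show ?thesis .
qed

lemma integral_cdf_T_law_shift:
  assumes "0 < v"
  shows "(\<integral>z. cdf (T_law m u k) (t - z) \<partial>gauss_law v) = rademacher_avg (2 ^ m)
    (\<lambda>e2. rademacher_avg (2 ^ m) (\<lambda>e1. cdf (gauss_law v) (t - T_coord m e1 e2 u k)))"
proof -
  let ?S = "sign_vectors (2 ^ m)"
  have "(\<integral>z. cdf (T_law m u k) (t - z) \<partial>gauss_law v)
      = (\<Sum>(e1, e2)\<in>?S \<times> ?S. cdf (gauss_law v) (t - T_coord m e1 e2 u k)) / card (?S \<times> ?S)"
    unfolding T_law_def using sign_vectors_nonempty assms
    by (subst integral_cdf_map_pmf_of_set_shift) (auto simp: case_prod_beta)
  also have "\<dots> = (\<Sum>e2\<in>?S. \<Sum>e1\<in>?S. cdf (gauss_law v) (t - T_coord m e1 e2 u k)) / (2 ^ 2 ^ m * 2 ^ 2 ^ m)"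
    by (subst sum.swap) (simp add: sum.cartesian_product card_cartesian_product card_sign_vectors)
  finally show ?thesis
    by (simp add: rademacher_avg_def sum_divide_distrib[symmetric] field_simps)
qed

lemma rademacher_avg_cdf_T_coord:
  assumes u: "(\<Sum>l<2 ^ m. (u l)\<^sup>2) = 1" and e2: "e2 \<in> sign_vectors (2 ^ m)" and v: "0 < v"
  shows "\<bar>rademacher_avg (2 ^ m) (\<lambda>e1. cdf (gauss_law v) (t - T_coord m e1 e2 u k))
      - cdf (gauss_law (v + 1 / 2 ^ m)) t\<bar>
    \<le> (\<Sum>j<2 ^ m. (HD m e2 u j) ^ 4) / (3 * sqrt (2 * pi) * v\<^sup>2 * (2 ^ m) ^ 4)"
proof -
  define c where "c j = hadamard m k j * HD m e2 u j / 2 ^ m" for j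
  have "(\<Sum>j<2 ^ m. (c j)\<^sup>2) = (\<Sum>j<2 ^ m. (HD m e2 u j)\<^sup>2) / (2 ^ m)\<^sup>2"
    by (simp add: c_def power_mult_distrib power_divide hadamard_sq sum_divide_distrib)
  also have "\<dots> = 1 / 2 ^ m"
    unfolding sum_HD_sq[OF e2] u by (simp add: power2_eq_square)
  finally have c2: "(\<Sum>j<2 ^ m. (c j)\<^sup>2) = 1 / 2 ^ m" .
  have "hadamard m k j ^ 4 = ((hadamard m k j)\<^sup>2)\<^sup>2" for j
    by (simp flip: power_mult)
  then have "hadamard m k j ^ 4 = 1" for j
    by (simp add: hadamard_sq)
  then have c4: "(\<Sum>j<2 ^ m. c j ^ 4) = (\<Sum>j<2 ^ m. (HD m e2 u j) ^ 4) / (2 ^ m) ^ 4"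
    by (simp add: c_def power_mult_distrib power_divide sum_divide_distrib)
  show ?thesis
    using lindeberg_rademacher[OF v order_refl, of "2 ^ m" t c]
    unfolding T_coord_eq_sum_HD c_def[symmetric] c2 c4 by (simp add: field_simps)
qed

lemma smoothed_cdf_T_law_error:
  assumes u: "(\<Sum>l<2 ^ m. (u l)\<^sup>2) = 1" and v: "0 < v"
  shows "\<bar>(\<integral>z. cdf (T_law m u k) (t - z) \<partial>gauss_law v) - (\<integral>z. cdf (gauss_law (1 / 2 ^ m)) (t - z) \<partial>gauss_law v)\<bar>
    \<le> 1 / (sqrt (2 * pi) * v\<^sup>2 * (2 ^ m) ^ 3)"
proof -
  define K where "K = 3 * sqrt (2 * pi) * v\<^sup>2 * (2 ^ m) ^ 4"
  have K: "0 < K" using v by (simp add: K_def)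
  have G: "(\<integral>z. cdf (gauss_law (1 / 2 ^ m)) (t - z) \<partial>gauss_law v) = cdf (gauss_law (v + 1 / 2 ^ m)) t"
    by (rule integral_cdf_gauss_law_shift[OF v]) simp
  have "\<bar>rademacher_avg (2 ^ m) (\<lambda>e2. rademacher_avg (2 ^ m) (\<lambda>e1. cdf (gauss_law v) (t - T_coord m e1 e2 u k)))
      - rademacher_avg (2 ^ m) (\<lambda>_. cdf (gauss_law (v + 1 / 2 ^ m)) t)\<bar>
      \<le> rademacher_avg (2 ^ m) (\<lambda>e2. (\<Sum>j<2 ^ m. (HD m e2 u j) ^ 4) / K)"
    using rademacher_avg_cdf_T_coord[OF u _ v] unfolding K_def by (intro abs_rademacher_avg_diff_le)
  then have "\<bar>(\<integral>z. cdf (T_law m u k) (t - z) \<partial>gauss_law v) - (\<integral>z. cdf (gauss_law (1 / 2 ^ m)) (t - z) \<partial>gauss_law v)\<bar>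
      \<le> rademacher_avg (2 ^ m) (\<lambda>e2. (\<Sum>j<2 ^ m. (HD m e2 u j) ^ 4) / K)"
    by (simp add: integral_cdf_T_law_shift[OF v] G)
  also have "\<dots> = rademacher_avg (2 ^ m) (\<lambda>e2. \<Sum>j<2 ^ m. (HD m e2 u j) ^ 4) / K"
    using rademacher_avg_mult_left[of _ "1 / K"] by simp
  also have "\<dots> \<le> 3 * 2 ^ m / K"
    using rademacher_avg_sum_HD_pow4_le[of m u] K by (simp add: u divide_right_mono)
  also have "\<dots> = 1 / (sqrt (2 * pi) * v\<^sup>2 * (2 ^ m) ^ 3)"
    using v by (simp add: K_def field_simps eval_nat_numeral)
  finally show ?thesis .
qed

section \<open>A smoothing inequality\<close>

lemma smoothing_window:
  fixes F G :: "real \<Rightarrow> real"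
  assumes "mono F" and G: "\<And>x y. \<bar>G x - G y\<bar> \<le> g * \<bar>x - y\<bar>" and z: "z \<in> {-a..a}"
  shows "F t - G t - 2 * a * g \<le> F (t + a - z) - G (t + a - z)"
proof -
  have "0 \<le> g" using G[of 1 0] by simp
  have "F t \<le> F (t + a - z)" using z \<open>mono F\<close> by (auto intro: monoD)
  moreover have "G (t + a - z) - G t \<le> g * \<bar>a - z\<bar>" using G[of "t + a - z" t] by simp
  moreover have "g * \<bar>a - z\<bar> \<le> 2 * a * g"
    using z \<open>0 \<le> g\<close> mult_left_mono[of "\<bar>a - z\<bar>" "2 * a" g] by (auto simp: mult_ac)
  ultimately show ?thesis by linarith
qed

lemma smoothing_window_reflected:
  fixes F G :: "real \<Rightarrow> real"
  assumes "mono F" and G: "\<And>x y. \<bar>G x - G y\<bar> \<le> g * \<bar>x - y\<bar>" and z: "z \<in> {-a..a}"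
  shows "G t - F t - 2 * a * g \<le> G (t - a - z) - F (t - a - z)"
proof -
  have "mono (\<lambda>x. - F (- x))" using \<open>mono F\<close> by (auto simp: mono_def)
  moreover have "\<bar>- G (- x) - - G (- y)\<bar> \<le> g * \<bar>x - y\<bar>" for x y
    using G[of "- y" "- x"] by (simp add: algebra_simps)
  ultimately show ?thesis
    using smoothing_window[of "\<lambda>x. - F (- x)" "\<lambda>x. - G (- x)" g "- z" a "- t"] z by simp
qed

lemma integral_ge_window:
  fixes h :: "real \<Rightarrow> real"
  assumes "prob_space N" and sets_N: "sets N = sets borel" and "integrable N h"
    and "\<And>z. z \<in> {-a..a} \<Longrightarrow> D \<le> h z" and "\<And>z. - \<eta> \<le> h z"
  shows "D * measure N {-a..a} - \<eta> * (1 - measure N {-a..a}) \<le> (\<integral>z. h z \<partial>N)"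
proof -
  interpret N: prob_space N by fact
  define I :: "real \<Rightarrow> real" where "I = indicator {-a..a}"
  have "space N = UNIV" using sets_eq_imp_space_eq[OF sets_N] by simp
  then have "(\<integral>z. I z \<partial>N) = measure N {-a..a}" by (simp add: I_def sets_N)
  moreover have "integrable N I" unfolding I_def
    by (rule integrable_real_indicator) (auto simp: sets_N N.emeasure_eq_measure)
  moreover have "D * I z - \<eta> * (1 - I z) \<le> h z" for z
    using assms(4,5) by (cases "z \<in> {-a..a}") (auto simp: I_def)
  ultimately show ?thesis
    using integral_mono[of N "\<lambda>z. D * I z - \<eta> * (1 - I z)" h] \<open>integrable N h\<close>
    by (simp add: N.prob_space)
qed

lemma smoothing_pointwise:
  fixes F G :: "real \<Rightarrow> real"
  assumes N: "prob_space N" "sets N = sets borel"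
    and F: "mono F" "\<And>t. integrable N (\<lambda>z. F (t - z))"
    and G: "\<And>x y. \<bar>G x - G y\<bar> \<le> g * \<bar>x - y\<bar>" "\<And>t. integrable N (\<lambda>z. G (t - z))"
    and smoothed: "\<And>t. \<bar>(\<integral>z. F (t - z) \<partial>N) - (\<integral>z. G (t - z) \<partial>N)\<bar> \<le> E"
    and \<eta>: "\<And>t. \<bar>F t - G t\<bar> \<le> \<eta>"
  shows "(\<bar>F t - G t\<bar> - 2 * a * g) * measure N {-a..a} - \<eta> * (1 - measure N {-a..a}) \<le> E"
proof -
  have \<eta>': "- \<eta> \<le> F x - G x" "- \<eta> \<le> G x - F x" for x using \<eta>[of x] by (simp_all add: abs_le_iff)
  show ?thesis
  proof (cases "G t \<le> F t")
    case True
    have "(\<bar>F t - G t\<bar> - 2 * a * g) * measure N {-a..a} - \<eta> * (1 - measure N {-a..a})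
        \<le> (\<integral>z. F (t + a - z) - G (t + a - z) \<partial>N)"
      using smoothing_window[OF F(1) G(1)] \<eta>' True F(2) G(2)
      by (intro integral_ge_window[OF N]) auto
    also have "\<dots> \<le> E" using smoothed[of "t + a"] F(2) G(2) by (simp add: abs_le_iff)
    finally show ?thesis .
  next
    case False
    have "(\<bar>F t - G t\<bar> - 2 * a * g) * measure N {-a..a} - \<eta> * (1 - measure N {-a..a})
        \<le> (\<integral>z. G (t - a - z) - F (t - a - z) \<partial>N)"
      using smoothing_window_reflected[OF F(1) G(1)] \<eta>' False F(2) G(2)
      by (intro integral_ge_window[OF N]) auto
    also have "\<dots> \<le> E" using smoothed[of "t - a"] F(2) G(2) by (simp add: abs_le_iff)
    finally show ?thesis .
  qed
qed

text \<open>Monotonicity of \<open>F\<close> and the Lipschitz bound on \<open>G\<close> preserve the deviation \<open>F - G\<close> at \<open>t\<close>,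
  up to \<open>2ag\<close>, on a window of width \<open>2a\<close> next to \<open>t\<close>; outside the window it is at least
  \<open>-\<eta> = -sup |F - G|\<close>. Averaging over \<open>N\<close>, which gives the window mass \<open>\<beta>\<close>, and taking the
  supremum over \<open>t\<close> yields \<open>\<beta> \<eta> \<le> E + 2ag\<beta> + (1 - \<beta>) \<eta>\<close>.\<close>

lemma kolmogorov_smoothing_inequality:
  fixes F G :: "real \<Rightarrow> real"
  assumes N: "prob_space N" "sets N = sets borel"
    and F: "mono F" "\<And>x. 0 \<le> F x \<and> F x \<le> 1"
    and G: "\<And>x. 0 \<le> G x \<and> G x \<le> 1" "\<And>x y. \<bar>G x - G y\<bar> \<le> g * \<bar>x - y\<bar>"
    and smoothed: "\<And>t. \<bar>(\<integral>z. F (t - z) \<partial>N) - (\<integral>z. G (t - z) \<partial>N)\<bar> \<le> E"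
  shows "(2 * measure N {-a..a} - 1) * (SUP t. \<bar>F t - G t\<bar>) \<le> E + 2 * a * g * measure N {-a..a}"
proof -
  interpret N: prob_space N by fact
  define \<beta> where "\<beta> = measure N {-a..a}"
  define \<eta> where "\<eta> = (SUP t. \<bar>F t - G t\<bar>)"
  have bdd: "bdd_above (range (\<lambda>t. \<bar>F t - G t\<bar>))"
    using F(2) G(1) by (intro bdd_aboveI[of _ 1]) (auto simp: abs_le_iff; smt (verit))
  have \<eta>: "\<bar>F t - G t\<bar> \<le> \<eta>" for t unfolding \<eta>_def by (rule cSUP_upper[OF _ bdd]) simp
  have "g-lipschitz_on UNIV G"
    using G(2) G(2)[of 1 0] by (intro lipschitz_onI) (auto simp: dist_real_def)
  then have [measurable]: "G \<in> borel_measurable borel"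
    by (intro borel_measurable_continuous_onI lipschitz_on_continuous_on)
  have [measurable]: "F \<in> borel_measurable borel" using F(1) by (rule borel_measurable_mono)
  have integrable: "integrable N (\<lambda>z. H (t - z))"
    if "H \<in> borel_measurable borel" "\<And>x. 0 \<le> H x \<and> H x \<le> 1" for H :: "real \<Rightarrow> real" and t
  proof (rule N.integrable_const_bound[where B=1])
    show "(\<lambda>z. H (t - z)) \<in> borel_measurable N"
      unfolding measurable_cong_sets[OF N(2) refl] using that(1) by measurable
  qed (use that(2) in auto)
  have pointwise: "\<beta> * \<bar>F t - G t\<bar> \<le> E + 2 * a * g * \<beta> + (1 - \<beta>) * \<eta>" for t
    using smoothing_pointwise[OF N F(1) _ G(2) _ smoothed \<eta>, of t a] integrable F(2) G(1)
    by (simp add: \<beta>_def algebra_simps)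
  have "\<beta> * \<eta> \<le> E + 2 * a * g * \<beta> + (1 - \<beta>) * \<eta>"
  proof (cases "\<beta> = 0")
    case True
    then show ?thesis using \<eta>[of 0] smoothed[of 0] by simp
  next
    case False
    then have "0 < \<beta>" by (simp add: \<beta>_def order_less_le)
    with pointwise have "\<eta> \<le> (E + 2 * a * g * \<beta> + (1 - \<beta>) * \<eta>) / \<beta>"
      unfolding \<eta>_def by (intro cSUP_least) (auto simp: field_simps)
    with \<open>0 < \<beta>\<close> show ?thesis by (simp add: field_simps)
  qed
  then show ?thesis by (simp add: \<beta>_def \<eta>_def algebra_simps)
qed

section \<open>The bound on the Kolmogorov distance\<close>

lemma kolmogorov_dist_eq_cdf: "kolmogorov_dist M N = (SUP t. \<bar>cdf M t - cdf N t\<bar>)"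
  by (simp add: kolmogorov_dist_def cdf_def)

lemma cdf_T_law_mono: "mono (cdf (T_law m u k))"
  unfolding cdf_def T_law_def mono_def by (auto intro!: measure_pmf.finite_measure_mono)

lemma cdf_T_law_bounds: "0 \<le> cdf (T_law m u k) x \<and> cdf (T_law m u k) x \<le> 1"
  unfolding cdf_def T_law_def by simp

lemma kolmogorov_dist_T_law_le:
  assumes u: "(\<Sum>l<2 ^ m. (u l)\<^sup>2) = 1" and "0 < \<delta>" "0 \<le> \<alpha>"
  defines "\<beta> \<equiv> measure (gauss_law (\<delta>\<^sup>2)) {-(\<alpha> * \<delta>)..\<alpha> * \<delta>}"
  shows "(2 * \<beta> - 1) * kolmogorov_dist (T_law m u k) (gauss_law (1 / 2 ^ m))
    \<le> 1 / (sqrt (2 * pi) * \<delta> ^ 4 * (2 ^ m) ^ 3) + 2 * (\<alpha> * \<delta>) * (sqrt (2 ^ m) / sqrt (2 * pi)) * \<beta>"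
proof -
  let ?G = "cdf (gauss_law (1 / 2 ^ m))"
  have G: "?G x = Phi (x * sqrt (2 ^ m))" for x
    by (simp add: cdf_gauss_law real_sqrt_divide)
  have "\<bar>?G x - ?G y\<bar> \<le> sqrt (2 ^ m) / sqrt (2 * pi) * \<bar>x - y\<bar>" for x y
    using Phi_lipschitz[of "x * sqrt (2 ^ m)" "y * sqrt (2 ^ m)"]
    by (simp add: G left_diff_distrib[symmetric] abs_mult mult_ac)
  moreover have "\<bar>(\<integral>z. cdf (T_law m u k) (t - z) \<partial>gauss_law (\<delta>\<^sup>2)) - (\<integral>z. ?G (t - z) \<partial>gauss_law (\<delta>\<^sup>2))\<bar>
      \<le> 1 / (sqrt (2 * pi) * \<delta> ^ 4 * (2 ^ m) ^ 3)" for t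
    using smoothed_cdf_T_law_error[OF u, of "\<delta>\<^sup>2"] \<open>0 < \<delta>\<close> by (simp flip: power_mult)
  ultimately show ?thesis
    unfolding \<beta>_def kolmogorov_dist_eq_cdf using \<open>0 < \<delta>\<close> \<open>0 \<le> \<alpha>\<close>
    by (intro kolmogorov_smoothing_inequality prob_space_gauss_law cdf_T_law_mono cdf_T_law_bounds)
      (auto simp: G Phi_nonneg Phi_le_1)
qed

lemma kolmogorov_dist_T_law_le_powr:
  assumes u: "(\<Sum>l<2 ^ m. (u l)\<^sup>2) = 1" and \<kappa>: "0 < \<kappa>" and \<alpha>: "0 \<le> \<alpha>"
  defines "x \<equiv> (2 ^ m) powr (-1/5) :: real"
  defines "\<delta> \<equiv> \<kappa> * x / sqrt (2 ^ m)"
  defines "\<beta> \<equiv> measure (gauss_law (\<delta>\<^sup>2)) {-(\<alpha> * \<delta>)..\<alpha> * \<delta>}"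
  shows "(2 * \<beta> - 1) * kolmogorov_dist (T_law m u k) (gauss_law (1 / 2 ^ m))
    \<le> (1 / \<kappa> ^ 4 + 2 * \<alpha> * \<kappa> * \<beta>) / sqrt (2 * pi) * x"
proof -
  define d :: real where "d = 2 ^ m"
  have "0 < d" "0 < x" by (simp_all add: d_def x_def)
  have "x ^ 5 = d powr (real 5 * (-1/5))"
    unfolding x_def d_def by (rule powr_power) simp
  also have "\<dots> = 1 / d" by (simp add: d_def powr_minus_divide)
  finally have "x ^ 5 = 1 / d" .
  then have "\<delta> ^ 4 * d ^ 3 = \<kappa> ^ 4 / x"
    using \<open>0 < x\<close> \<open>0 < d\<close> unfolding \<delta>_def d_def[symmetric]
    by (simp add: power_divide power_mult_distrib field_simps eval_nat_numeral)
  then have "1 / (sqrt (2 * pi) * \<delta> ^ 4 * d ^ 3) + 2 * (\<alpha> * \<delta>) * (sqrt d / sqrt (2 * pi)) * \<beta>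
      = (1 / \<kappa> ^ 4 + 2 * \<alpha> * \<kappa> * \<beta>) / sqrt (2 * pi) * x"
    using \<kappa> \<open>0 < x\<close> by (simp add: \<delta>_def d_def field_simps)
  moreover have "0 < \<delta>" using \<kappa> \<open>0 < x\<close> by (simp add: \<delta>_def)
  ultimately show ?thesis
    using kolmogorov_dist_T_law_le[OF u \<open>0 < \<delta>\<close> \<alpha>, of k] by (simp add: \<beta>_def d_def)
qed

lemma sqrt_2pi_bounds: "2.5062 \<le> sqrt (2 * pi) \<and> sqrt (2 * pi) \<le> 2.507"
proof
  have pi: "3.141592653588 \<le> pi" "pi \<le> 3.1415926535899" using pi_approx by auto
  show "2.5062 \<le> sqrt (2 * pi)"
    by (rule real_le_rsqrt) (use pi in \<open>simp add: power2_eq_square\<close>)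
  have "sqrt (2 * pi) \<le> sqrt (2.507\<^sup>2)"
    by (rule real_sqrt_le_mono) (use pi in \<open>simp add: power2_eq_square\<close>)
  then show "sqrt (2 * pi) \<le> 2.507" by simp
qed

lemma C_G_ge: "2.42 \<le> C_G"
proof -
  have "C_G ^ 5 = 5 ^ 5 * (3 powr (4/5)) ^ 5 / (pi powr (7/5)) ^ 5"
    unfolding C_G_def by (simp add: power_divide power_mult_distrib)
  also have "(3 powr (4/5)) ^ 5 = (81::real)"
    by (subst powr_power) (simp_all add: powr_numeral)
  also have "(pi powr (7/5)) ^ 5 = pi ^ 7"
    by (subst powr_power) (simp_all add: powr_numeral)
  finally have C5: "C_G ^ 5 = 253125 / pi ^ 7" by simp
  have "pi ^ 7 \<le> 3.1416 ^ 7" using pi_approx by (intro power_mono) auto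
  also have "\<dots> \<le> 3020.35" by (simp add: power_divide eval_nat_numeral)
  finally have "253125 / 3020.35 \<le> C_G ^ 5" unfolding C5 by (intro divide_left_mono) auto
  moreover have "(2.42::real) ^ 5 \<le> 253125 / 3020.35" by (simp add: power_divide eval_nat_numeral)
  ultimately have "2.42 ^ 5 \<le> C_G ^ 5" by linarith
  then show ?thesis by (subst (asm) power_mono_iff) (simp_all add: C_G_def)
qed

text \<open>The parameters \<open>\<kappa> = 59/50\<close> and \<open>\<alpha> = 61/50\<close> of the smoothing are tuned numerically so that
  \<open>(1/\<kappa>\<^sup>4 + 2\<alpha>\<kappa>\<beta>) / (\<surd>(2\<pi>) (2\<beta> - 1)) \<le> C\<^sub>G\<close>.\<close>

lemma smoothing_parameters_numeric:
  assumes b: "Phi (61/50) - Phi (- (61/50)) \<le> b"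
  shows "0 < 2 * b - 1"
    and "(1 / (59/50) ^ 4 + 2 * (61/50) * (59/50) * b) / sqrt (2 * pi) \<le> C_G * (2 * b - 1)"
proof -
  define q where "q = 1 / sqrt (2 * pi)"
  define A :: real where "A = 688019 / 375000"
  have q: "2493/6250 \<le> q" "q \<le> 19951/50000"
  proof -
    have s: "2.5062 \<le> sqrt (2 * pi)" "sqrt (2 * pi) \<le> 2.507" using sqrt_2pi_bounds by auto
    have "1 / 2.507 \<le> q" unfolding q_def using s by (intro divide_left_mono) auto
    moreover have "q \<le> 1 / 2.5062" unfolding q_def using s by (intro divide_left_mono) auto
    ultimately show "2493/6250 \<le> q" "q \<le> 19951/50000" by simp_all
  qed
  have "q * A \<le> b"
    using Phi_symmetric_interval_lower[of "61/50"] b by (simp add: q_def A_def power3_eq_cube)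
  have C: "121/50 \<le> C_G" using C_G_ge by simp
  have "0 \<le> 2 * C_G - 2 * (61/50) * (59/50) * q" using C q by linarith
  then have F1: "(q * A) * (2 * C_G - 2 * (61/50) * (59/50) * q) \<le> b * (2 * C_G - 2 * (61/50) * (59/50) * q)"
    using \<open>q * A \<le> b\<close> by (intro mult_right_mono) auto
  have "0 \<le> 2 * q * A - 1" using q by (simp add: A_def)
  then have F2: "(121/50) * (2 * q * A - 1) \<le> C_G * (2 * q * A - 1)" using C by (intro mult_right_mono) auto
  have F3: "q * q \<le> (19951/50000) * q" using q by (intro mult_right_mono) auto
  have "0 \<le> (121/50) * (2 * q * A - 1) - 2 * (61/50) * (59/50) * A * ((19951/50000) * q) - q / (59/50) ^ 4"
    using q by (simp add: A_def power_divide eval_nat_numeral)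
  moreover have "2 * (61/50) * (59/50) * A * (q * q) \<le> 2 * (61/50) * (59/50) * A * ((19951/50000) * q)"
    using F3 by (intro mult_left_mono) (auto simp: A_def)
  moreover have "C_G * (2 * b - 1) - (q / (59/50) ^ 4 + 2 * (61/50) * (59/50) * q * b)
      = b * (2 * C_G - 2 * (61/50) * (59/50) * q) - C_G - q / (59/50) ^ 4"
    by (simp add: algebra_simps)
  moreover have "(q * A) * (2 * C_G - 2 * (61/50) * (59/50) * q) - C_G - q / (59/50) ^ 4
      = C_G * (2 * q * A - 1) - 2 * (61/50) * (59/50) * A * (q * q) - q / (59/50) ^ 4"
    by (simp add: algebra_simps)
  ultimately have "q / (59/50) ^ 4 + 2 * (61/50) * (59/50) * q * b \<le> C_G * (2 * b - 1)"
    using F1 F2 by linarith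
  then show "(1 / (59/50) ^ 4 + 2 * (61/50) * (59/50) * b) / sqrt (2 * pi) \<le> C_G * (2 * b - 1)"
    by (simp add: q_def field_simps)
  show "0 < 2 * b - 1" using \<open>q * A \<le> b\<close> q by (simp add: A_def)
qed

theorem mainTheorem3:
  fixes m :: nat
  assumes "m \<ge> 1"
  shows "\<forall>u :: nat \<Rightarrow> real. (\<Sum>l<2^m. (u l)^2) = 1 \<longrightarrow>
           (\<forall>k<2^m. kolmogorov_dist (T_law m u k) (gauss_law (1 / 2^m))
                        \<le> C_G * (2^m) powr (-1/5))"
proof (intro allI impI)
  fix u :: "nat \<Rightarrow> real" and k :: nat
  assume u: "(\<Sum>l<2^m. (u l)^2) = 1" and "k < 2^m"
  define x :: real where "x = (2 ^ m) powr (-1/5)"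
  define \<delta> where "\<delta> = 59/50 * x / sqrt (2 ^ m)"
  define \<beta> where "\<beta> = measure (gauss_law (\<delta>\<^sup>2)) {-(61/50 * \<delta>)..61/50 * \<delta>}"
  have "0 < \<delta>" by (simp add: \<delta>_def x_def)
  then have "Phi (61/50) - Phi (- (61/50)) \<le> \<beta>"
    using measure_gauss_law_symmetric_interval[of "\<delta>\<^sup>2" "61/50 * \<delta>"] by (simp add: \<beta>_def)
  then have pos: "0 < 2 * \<beta> - 1"
    and num: "(1 / (59/50) ^ 4 + 2 * (61/50) * (59/50) * \<beta>) / sqrt (2 * pi) \<le> C_G * (2 * \<beta> - 1)"
    by (fact smoothing_parameters_numeric)+
  have "(2 * \<beta> - 1) * kolmogorov_dist (T_law m u k) (gauss_law (1 / 2 ^ m))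
      \<le> (1 / (59/50) ^ 4 + 2 * (61/50) * (59/50) * \<beta>) / sqrt (2 * pi) * x"
    unfolding \<beta>_def \<delta>_def x_def by (rule kolmogorov_dist_T_law_le_powr[OF u]) simp_all
  also have "\<dots> \<le> (2 * \<beta> - 1) * (C_G * x)"
    using mult_right_mono[OF num, of x] by (simp add: x_def mult_ac)
  finally show "kolmogorov_dist (T_law m u k) (gauss_law (1 / 2^m)) \<le> C_G * (2^m) powr (-1/5)"
    using pos by (simp add: x_def)
qed

end
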